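(* Let $\tau\in F_2$ and let $Z=X+\tau Y\in\mathbb{C}^2$ with $X=(x_1,x_2),Y=(y_1,y_2)\in\mathbb{R}^2$, $(X,Y)\ne(0,0)$, $\|(X,Y)\|:=\max\{|x_1|,|x_2|,|y_1|,|y_2|\}\le\frac12$, and $\theta_{a,b}(Z,\tau)\neq 0$ for $a=(\tfrac12,\tfrac12)$, $b=(0,\tfrac12)$. Put $\Lambda(Z)=-\log\big(|\theta_{a,b}(Z,\tau)|\,e^{-\pi\,{}^t\operatorname{Im}Z(\operatorname{Im}\tau)^{-1}\operatorname{Im}Z}\big)$ and $\delta(a+Y)=\min\{d(\tfrac12+y_1,\mathbb{Z}),d(\tfrac12+y_2,\mathbb{Z})\}$. Then $$\Lambda(Z)\ge \pi\big(\operatorname{Tr}(\operatorname{Im}\tau)-2\operatorname{Im}\tau_{12}\big)\delta(a+Y)^2-\log\Big(4+\frac32\operatorname{Tr}(\operatorname{Im}\tau)\Big)+\log\frac{1}{\|(X,Y)\|}-\log C_3(Y),$$ where $C_3(Y)=\max_{i\in\{1,2\}}8\pi\Big(\frac4\pi+2|y_i|+\frac12\Big(\sqrt{y_i^2+\frac8\pi}+2\Big)^2+\frac12\Big)$ (in particular $C_3(Y)\le 239{,}2$).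
   Context: $F_2$ is the standard Siegel fundamental domain for $\mathrm{Sp}_4(\mathbb{Z})$ acting on symmetric complex $2\times2$ matrices $\tau=\begin{pmatrix}\tau_1&\tau_{12}\\ \tau_{12}&\tau_2\end{pmatrix}$ with $\operatorname{Im}\tau>0$; every $\tau\in F_2$ satisfies $|\operatorname{Re}\tau_{ij}|\le 1/2$, $\operatorname{Im}\tau_2\ge\operatorname{Im}\tau_1\ge 2\operatorname{Im}\tau_{12}\ge 0$, $\operatorname{Im}\tau_1\ge\sqrt3/2$. Theta function with characteristic $a,b\in\{0,\frac12\}^2$: $\theta_{a,b}(Z,\tau)=\sum_{n\in\mathbb{Z}^2}\exp\big(2i\pi(\tfrac12{}^t(n+a)\tau(n+a)+{}^t(n+a)(Z+b))\big)$. $d(x,\mathbb{Z})$ is the distance from $x$ to the nearest integer. *)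

theory Defs
  imports "HOL-Analysis.Analysis"
begin

definition ImM :: "complex^2^2 \<Rightarrow> real^2^2" where
  "ImM \<tau> = (\<chi> i j. Im (\<tau> $ i $ j))"

definition ReM :: "complex^2^2 \<Rightarrow> real^2^2" where
  "ReM \<tau> = (\<chi> i j. Re (\<tau> $ i $ j))"

definition ImV :: "complex^2 \<Rightarrow> real^2" where
  "ImV z = (\<chi> i. Im (z $ i))"

definition pos_def_real :: "real^2^2 \<Rightarrow> bool" where
  "pos_def_real Y \<longleftrightarrow> (\<forall>v. v \<noteq> 0 \<longrightarrow> v \<bullet> (Y *v v) > 0)"

definition siegel_upper :: "complex^2^2 \<Rightarrow> bool" where
  "siegel_upper \<tau> \<longleftrightarrow> transpose \<tau> = \<tau> \<and> pos_def_real (ImM \<tau>)"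

text \<open>Block description of \<open>M = (A B; C D) \<in> Sp_4(\<int>)\<close>: this is \<open>M^t J M = J\<close> unfolded.\<close>
definition Sp4Z_blocks :: "int^2^2 \<Rightarrow> int^2^2 \<Rightarrow> int^2^2 \<Rightarrow> int^2^2 \<Rightarrow> bool" where
  "Sp4Z_blocks A B C D \<longleftrightarrow>
     transpose A ** C = transpose C ** A \<and>
     transpose B ** D = transpose D ** B \<and>
     transpose A ** D - transpose C ** B = mat 1"

definition cmat :: "int^2^2 \<Rightarrow> complex^2^2" where
  "cmat M = (\<chi> i j. of_int (M $ i $ j))"

text \<open>Siegel's fundamental domain \<open>F_2\<close>: (i) \<open>|det(C\<tau>+D)| \<ge> 1\<close> for all
  \<open>(A B; C D) \<in> Sp_4(\<int>)\<close>; (ii) \<open>Im \<tau>\<close> Minkowski reduced; (iii) \<open>|Re \<tau>_ij| \<le> 1/2\<close>.\<close>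
definition F2 :: "(complex^2^2) set" where
  "F2 = {\<tau>. siegel_upper \<tau> \<and>
     (\<forall>A B C D. Sp4Z_blocks A B C D \<longrightarrow> cmod (det (cmat C ** \<tau> + cmat D)) \<ge> 1) \<and>
     (\<forall>i j. \<bar>Re (\<tau> $ i $ j)\<bar> \<le> 1/2) \<and>
     Im (\<tau> $ 2 $ 2) \<ge> Im (\<tau> $ 1 $ 1) \<and> Im (\<tau> $ 1 $ 1) \<ge> 2 * Im (\<tau> $ 1 $ 2) \<and>
     2 * Im (\<tau> $ 1 $ 2) \<ge> 0}"

definition theta :: "real^2 \<Rightarrow> real^2 \<Rightarrow> complex^2 \<Rightarrow> complex^2^2 \<Rightarrow> complex" where
  "theta a b Z \<tau> = infsum (\<lambda>n::int^2.
     (let w = (\<lambda>i. of_int (n $ i) + complex_of_real (a $ i)) in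
      exp (2 * pi * \<i> * ((1/2) * (\<Sum>i\<in>UNIV. \<Sum>j\<in>UNIV. w i * \<tau> $ i $ j * w j)
                         + (\<Sum>i\<in>UNIV. w i * (Z $ i + complex_of_real (b $ i))))))) UNIV"

definition dZ :: "real \<Rightarrow> real" where
  "dZ x = infdist x \<int>"

definition C3 :: "real^2 \<Rightarrow> real" where
  "C3 Y = Max ((\<lambda>i. 8 * pi * (4 / pi + 2 * \<bar>Y $ i\<bar>
        + (1/2) * (sqrt ((Y $ i)^2 + 8 / pi) + 2)^2 + 1/2)) ` UNIV)"

end

theory Submission
  imports Defs
begin

(* Writing Z = X + tau Y, the series theta_{a,b}(Z,tau) factors as e^kappa * S(X,Y) with
   S(X,Y) = sum_n exp phi_n(X,Y),  phi_n = 2 pi i (u^t tau u / 2 + u^t (X + b)),  u = n + a + Y,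
   and |e^kappa| = exp(pi Im Z^t (Im tau)^-1 Im Z); so the left-hand side is -log |S(X,Y)|.
   As the characteristic is odd, S(0,0) = theta_{a,b}(0,tau) = 0 (n -> -n-1 flips every term),
   hence |S(X,Y)| <= sum_n |phi_n(X,Y) - phi_n(0,0)| (e^{Re phi_n(X,Y)} + e^{Re phi_n(0,0)}).
   The phase change is at most 2 pi ||(X,Y)|| (2 + Tr Im tau) (1 + |n1 + 1/2| + |n2 + 1/2|), and
   e^{Re phi_n} is dominated by a product of Gaussians exp(-pi c_i (n_i + alpha_i)^2) with
   c_i = Im tau_ii - Im tau_12, for which Minkowski reduction gives e^{-pi c_i} <= 3/10.
   Geometric series then bound the Gaussian lattice sums by constants times
   exp(-pi c_i d(alpha_i, Z)^2), and the constants are absorbed into C_3(Y). *)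

lemma geometric_partial_sum_le:
  fixes x :: real assumes "0 \<le> x" "x < 1"
  shows "(\<Sum>n<M. x ^ n) \<le> 1 / (1 - x)"
proof -
  have "(\<Sum>n<M. x ^ n) = (1 - x ^ M) / (1 - x)"
    using assms by (simp add: sum_gp_strict)
  also have "\<dots> \<le> 1 / (1 - x)"
    using assms by (simp add: divide_right_mono)
  finally show ?thesis .
qed

lemma weighted_geometric_partial_sum:
  fixes x :: real
  shows "(\<Sum>n<M. real n * x ^ n) * (1 - x)^2 = x - real M * x ^ M + (real M - 1) * x ^ (M+1)"
proof (induction M)
  case (Suc M)
  have "(\<Sum>n<Suc M. real n * x ^ n) * (1 - x)^2
      = (\<Sum>n<M. real n * x ^ n) * (1 - x)^2 + real M * x^M * (1-x)^2"
    by (simp add: algebra_simps)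
  also have "\<dots> = x - real (Suc M) * x ^ (Suc M) + (real (Suc M) - 1) * x ^ (Suc M+1)"
    unfolding Suc.IH by (simp add: algebra_simps power2_eq_square)
  finally show ?case .
qed simp

lemma weighted_geometric_partial_sum_le:
  fixes x :: real assumes "0 \<le> x" "x < 1"
  shows "(\<Sum>n<M. real n * x ^ n) \<le> x / (1 - x)^2"
proof -
  have "(real M - 1) * x ^ (M+1) \<le> real M * x ^ (M+1)"
    using assms by (intro mult_right_mono) auto
  also have "\<dots> \<le> real M * x ^ M"
    using assms by (intro mult_left_mono) (auto simp: mult_left_le_one_le)
  finally have "x - real M * x ^ M + (real M - 1) * x ^ (M+1) \<le> x" by simp
  then show ?thesis
    using weighted_geometric_partial_sum[of x M] assms by (simp add: field_simps)
qed

text \<open>A finite sum of nonnegative terms over \<open>\<int>\<close> is dominated by a sum over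
  \<open>0, \<dots>, M-1\<close> and one over \<open>-1, \<dots>, -M\<close>; this reduces one-dimensional
  lattice sums to geometric series.\<close>

lemma int_sum_le_nat_sums:
  fixes f :: "int \<Rightarrow> real"
  assumes "finite J" and "\<And>j. f j \<ge> 0"
  obtains M where "sum f J \<le> (\<Sum>n<M. f (int n)) + (\<Sum>n<M. f (- int n - 1))"
proof
  define M where "M = Suc (nat (Max (abs ` J)))"
  let ?P = "int ` {..<M}" and ?N = "(\<lambda>n. - int n - 1) ` {..<M}"
  have "J \<subseteq> ?P \<union> ?N"
  proof
    fix j assume "j \<in> J"
    then have "\<bar>j\<bar> \<le> Max (abs ` J)" using assms(1) by simp
    then have bound: "\<bar>j\<bar> < int M" by (simp add: M_def) linarith
    show "j \<in> ?P \<union> ?N"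
    proof (cases "j \<ge> 0")
      case True
      then show ?thesis using bound by (auto intro!: image_eqI[of _ _ "nat j"])
    next
      case False
      then show ?thesis using bound by (auto intro!: image_eqI[of _ _ "nat (- j - 1)"])
    qed
  qed
  then have "sum f J \<le> sum f (?P \<union> ?N)"
    by (intro sum_mono2) (auto simp: assms)
  also have "\<dots> = sum f ?P + sum f ?N"
    by (intro sum.union_disjoint) auto
  also have "\<dots> = (\<Sum>n<M. f (int n)) + (\<Sum>n<M. f (- int n - 1))"
    by (simp add: sum.reindex inj_on_def)
  finally show "sum f J \<le> (\<Sum>n<M. f (int n)) + (\<Sum>n<M. f (- int n - 1))" .
qed

lemma nonneg_summable_bounded:
  fixes f :: "'a \<Rightarrow> real"
  assumes nonneg: "\<And>x. f x \<ge> 0" and bound: "\<And>F. finite F \<Longrightarrow> sum f F \<le> B"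
  shows "f summable_on UNIV" and "infsum f UNIV \<le> B"
proof -
  show sum: "f summable_on UNIV"
    by (rule nonneg_bdd_above_summable_on) (auto intro!: bdd_aboveI2 nonneg bound)
  show "infsum f UNIV \<le> B"
    by (rule infsum_le_finite_sums[OF sum bound])
qed

lemma norm_infsum_le_by_vanishing_series:
  fixes h h0 :: "'a \<Rightarrow> 'b::banach" and D :: "'a \<Rightarrow> real"
  assumes h0_zero: "infsum h0 UNIV = 0" and h0_sum: "(\<lambda>n. norm (h0 n)) summable_on UNIV"
    and D_sum: "D summable_on UNIV" and diff: "\<And>n. norm (h n - h0 n) \<le> D n"
  shows "norm (infsum h UNIV) \<le> infsum D UNIV"
proof -
  have diff_sum: "(\<lambda>n. norm (h n - h0 n)) summable_on UNIV"
    by (rule Infinite_Sum.abs_summable_on_comparison_test'[OF D_sum diff])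
  have "infsum h UNIV = infsum (\<lambda>n. (h n - h0 n) + h0 n) UNIV" by simp
  also have "\<dots> = infsum (\<lambda>n. h n - h0 n) UNIV"
    using infsum_add[OF abs_summable_summable[OF diff_sum] abs_summable_summable[OF h0_sum]] h0_zero
    by simp
  finally have "norm (infsum h UNIV) \<le> infsum (\<lambda>n. norm (h n - h0 n)) UNIV"
    using norm_infsum_bound[OF diff_sum] by simp
  also have "\<dots> \<le> infsum D UNIV" by (rule infsum_mono[OF diff_sum D_sum diff])
  finally show ?thesis .
qed

text \<open>The hypothesis \<open>e^{-\<pi> c} \<le> 3/10\<close> on the decay rate of a Gaussian is
  what Minkowski reduction provides; it forces \<open>c > 0\<close>.\<close>

lemma decay_rate_pos:
  fixes c :: real assumes q: "exp (-pi*c) \<le> 3/10" shows "c > 0"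
proof (rule ccontr)
  assume "\<not> c > 0"
  then have "1 \<le> exp (-pi*c)" by (simp add: mult_le_0_iff)
  then show False using q by linarith
qed

lemma gauss_decay:
  fixes c e t :: real
  assumes q: "exp (-pi*c) \<le> 3/10" and t: "e^2 + real k \<le> t"
  shows "exp (-pi*c*t) \<le> exp (-pi*c*e^2) * (3/10)^k"
proof -
  have "exp (-pi*c*t) \<le> exp (-pi*c*(e^2 + real k))"
    using t decay_rate_pos[OF q] by (simp add: mult_left_mono)
  also have "\<dots> = exp (-pi*c*e^2) * exp (-pi*c)^k"
    by (simp add: algebra_simps exp_add[symmetric] exp_of_nat_mult[symmetric])
  also have "\<dots> \<le> exp (-pi*c*e^2) * (3/10)^k"
    using q by (intro mult_left_mono power_mono) auto
  finally show ?thesis .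
qed

lemma centered_gauss_terms:
  fixes c e :: real
  assumes q: "exp (-pi*c) \<le> 3/10" and e: "0 \<le> e" "e \<le> 1/2"
  shows "exp (-pi*c*(real n + e)^2) \<le> exp (-pi*c*e^2) * (3/10)^n"
    and "exp (-pi*c*(- real n - 1 + e)^2) \<le> exp (-pi*c*e^2) * (9/100)^n"
proof -
  have square: "real n \<le> real n * real n" by (cases n) auto
  moreover have "0 \<le> e * real n" using e by simp
  ultimately have "e^2 + real n \<le> (real n + e)^2"
    by (simp add: power2_eq_square algebra_simps)
  then show "exp (-pi*c*(real n + e)^2) \<le> exp (-pi*c*e^2) * (3/10)^n"
    by (rule gauss_decay[OF q])
  have "2 * real n \<le> real n * real n + real n" using square by linarith
  moreover have "2 * e * (real n + 1) \<le> real n + 1"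
    using e by (simp add: mult_right_mono)
  ultimately have "e^2 + real (2*n) \<le> (- real n - 1 + e)^2"
    by (simp add: power2_eq_square algebra_simps)
  then have "exp (-pi*c*(- real n - 1 + e)^2) \<le> exp (-pi*c*e^2) * (3/10)^(2*n)"
    by (rule gauss_decay[OF q])
  then show "exp (-pi*c*(- real n - 1 + e)^2) \<le> exp (-pi*c*e^2) * (9/100)^n"
    by (simp add: power_mult power2_eq_square)
qed

lemma geometric_constants:
  "(\<Sum>n<M. (3/10::real)^n) \<le> 10/7" "(\<Sum>n<M. (9/100::real)^n) \<le> 100/91"
  "(\<Sum>n<M. real n * (3/10::real)^n) \<le> 30/49" "(\<Sum>n<M. real n * (9/100::real)^n) \<le> 900/8281"
  using geometric_partial_sum_le[of "3/10" M] geometric_partial_sum_le[of "9/100" M]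
    weighted_geometric_partial_sum_le[of "3/10" M] weighted_geometric_partial_sum_le[of "9/100" M]
  by (simp_all add: power2_eq_square)

lemma centered_gauss_sum:
  fixes c e :: real and J :: "int set"
  assumes q: "exp (-pi*c) \<le> 3/10" and e: "0 \<le> e" "e \<le> 1/2" and J: "finite J"
  shows "(\<Sum>j\<in>J. exp (-pi*c*(of_int j + e)^2)) \<le> exp (-pi*c*e^2) * (230/91)"
proof -
  let ?E = "exp (-pi*c*e^2)" and ?f = "\<lambda>j::int. exp (-pi*c*(of_int j + e)^2)"
  obtain M where M: "sum ?f J \<le> (\<Sum>n<M. ?f (int n)) + (\<Sum>n<M. ?f (- int n - 1))"
    using int_sum_le_nat_sums[OF J, of ?f] by auto
  have "(\<Sum>n<M. ?f (int n)) \<le> (\<Sum>n<M. ?E * (3/10)^n)"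
    using centered_gauss_terms(1)[OF q e] by (intro sum_mono) simp
  also have "\<dots> \<le> ?E * (10/7)"
    using geometric_constants(1)[of M] by (simp add: sum_distrib_left[symmetric] mult_left_mono)
  finally have pos: "(\<Sum>n<M. ?f (int n)) \<le> ?E * (10/7)" .
  have "(\<Sum>n<M. ?f (- int n - 1)) \<le> (\<Sum>n<M. ?E * (9/100)^n)"
    using centered_gauss_terms(2)[OF q e] by (intro sum_mono) simp
  also have "\<dots> \<le> ?E * (100/91)"
    using geometric_constants(2)[of M] by (simp add: sum_distrib_left[symmetric] mult_left_mono)
  finally have neg: "(\<Sum>n<M. ?f (- int n - 1)) \<le> ?E * (100/91)" .
  show ?thesis using M pos neg by linarith
qed

lemma centered_gauss_weighted_sum:
  fixes c e :: real and J :: "int set"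
  assumes q: "exp (-pi*c) \<le> 3/10" and e: "0 \<le> e" "e \<le> 1/2" and J: "finite J"
  shows "(\<Sum>j\<in>J. \<bar>of_int j + e\<bar> * exp (-pi*c*(of_int j + e)^2))
           \<le> exp (-pi*c*e^2) * (30/49 + 5/7 + 10000/8281)"
proof -
  let ?E = "exp (-pi*c*e^2)" and ?g = "\<lambda>j::int. \<bar>of_int j + e\<bar> * exp (-pi*c*(of_int j + e)^2)"
  obtain M where M: "sum ?g J \<le> (\<Sum>n<M. ?g (int n)) + (\<Sum>n<M. ?g (- int n - 1))"
    using int_sum_le_nat_sums[OF J, of ?g] by auto
  have "(\<Sum>n<M. ?g (int n)) \<le> (\<Sum>n<M. (real n + 1/2) * (?E * (3/10)^n))"
    using e centered_gauss_terms(1)[OF q e] by (intro sum_mono mult_mono) simp_all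
  also have "\<dots> = ?E * ((\<Sum>n<M. real n * (3/10)^n) + 1/2 * (\<Sum>n<M. (3/10)^n))"
    by (simp add: sum_distrib_left sum.distrib algebra_simps)
  also have "\<dots> \<le> ?E * (30/49 + 5/7)"
    using geometric_constants(1,3)[of M] by (intro mult_left_mono) auto
  finally have pos: "(\<Sum>n<M. ?g (int n)) \<le> ?E * (30/49 + 5/7)" .
  have "(\<Sum>n<M. ?g (- int n - 1)) \<le> (\<Sum>n<M. (real n + 1) * (?E * (9/100)^n))"
    using e centered_gauss_terms(2)[OF q e] by (intro sum_mono mult_mono) simp_all
  also have "\<dots> = ?E * ((\<Sum>n<M. real n * (9/100)^n) + (\<Sum>n<M. (9/100)^n))"
    by (simp add: sum_distrib_left sum.distrib algebra_simps)
  also have "\<dots> \<le> ?E * (10000/8281)"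
    using geometric_constants(2,4)[of M] by (intro mult_left_mono) auto
  finally have neg: "(\<Sum>n<M. ?g (- int n - 1)) \<le> ?E * (10000/8281)" .
  have "?E * (30/49 + 5/7) + ?E * (10000/8281) = ?E * (30/49 + 5/7 + 10000/8281)"
    by (simp add: algebra_simps)
  then show ?thesis using M pos neg by linarith
qed

lemma dZ_le: "dZ x \<le> \<bar>x - of_int r\<bar>"
proof -
  have "infdist x \<int> \<le> dist x (of_int r)" by (rule infdist_le) simp
  then show ?thesis by (simp add: dZ_def dist_real_def)
qed

lemma dZ_nonneg: "dZ x \<ge> 0" by (simp add: dZ_def infdist_nonneg)

lemma lattice_sum_recenter:
  fixes g :: "real \<Rightarrow> real" and \<alpha> :: real and K :: "int set"
  assumes K: "finite K" and even: "\<And>x. g (- x) = g x"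
  obtains e J where "dZ \<alpha> \<le> e" "e \<le> 1/2" "finite J"
    "(\<Sum>k\<in>K. g (of_int k + \<alpha>)) = (\<Sum>j\<in>J. g (of_int j + e))"
proof -
  define r where "r = \<lfloor>\<alpha> + 1/2\<rfloor>"
  define e0 where "e0 = \<alpha> - of_int r"
  have e0: "-1/2 \<le> e0" "e0 < 1/2"
    unfolding e0_def r_def using floor_correct[of "\<alpha> + 1/2"] by linarith+
  have dz: "dZ \<alpha> \<le> \<bar>e0\<bar>" unfolding e0_def by (rule dZ_le)
  show thesis
  proof (cases "e0 \<ge> 0")
    case True
    have "(\<Sum>k\<in>K. g (of_int k + \<alpha>)) = (\<Sum>j\<in>(\<lambda>k. k + r) ` K. g (of_int j + e0))"
      by (simp add: sum.reindex inj_on_def e0_def)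
    then show thesis using that[of e0 "(\<lambda>k. k + r) ` K"] True e0 dz K by auto
  next
    case False
    have "g (of_int k + \<alpha>) = g (of_int (- k - r) + - e0)" for k
      using even[of "of_int k + \<alpha>"] by (simp add: e0_def)
    then have "(\<Sum>k\<in>K. g (of_int k + \<alpha>)) = (\<Sum>j\<in>(\<lambda>k. - k - r) ` K. g (of_int j + - e0))"
      by (simp add: sum.reindex inj_on_def del: of_int_diff of_int_minus)
    then show thesis using that[of "- e0" "(\<lambda>k. - k - r) ` K"] False e0 dz K by auto
  qed
qed

lemma gauss_sums_bound:
  fixes c \<alpha> :: real and K :: "int set"
  assumes q: "exp (-pi*c) \<le> 3/10" and K: "finite K"
  shows "(\<Sum>k\<in>K. exp (-pi*c*(of_int k + \<alpha>)^2)) \<le> exp (-pi*c*(dZ \<alpha>)^2) * (230/91)"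
    and "(\<Sum>k\<in>K. \<bar>of_int k + \<alpha>\<bar> * exp (-pi*c*(of_int k + \<alpha>)^2))
           \<le> exp (-pi*c*(dZ \<alpha>)^2) * (30/49 + 5/7 + 10000/8281)"
proof -
  have central: "exp (-pi*c*e^2) \<le> exp (-pi*c*(dZ \<alpha>)^2)" if "dZ \<alpha> \<le> e" for e
  proof -
    have "(dZ \<alpha>)^2 \<le> e^2" using that dZ_nonneg[of \<alpha>] by (intro power_mono) auto
    then show ?thesis using decay_rate_pos[OF q] by (simp add: mult_left_mono)
  qed
  obtain e J where e: "dZ \<alpha> \<le> e" "e \<le> 1/2" and J: "finite J"
    and eq: "(\<Sum>k\<in>K. exp (-pi*c*(of_int k + \<alpha>)^2)) = (\<Sum>j\<in>J. exp (-pi*c*(of_int j + e)^2))"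
    using lattice_sum_recenter[OF K, of "\<lambda>x. exp (-pi*c*x^2)"] by auto
  have e0: "e \<ge> 0" using e(1) dZ_nonneg[of \<alpha>] by linarith
  show "(\<Sum>k\<in>K. exp (-pi*c*(of_int k + \<alpha>)^2)) \<le> exp (-pi*c*(dZ \<alpha>)^2) * (230/91)"
    unfolding eq by (rule order_trans[OF centered_gauss_sum[OF q e0 e(2) J]])
      (rule mult_right_mono[OF central[OF e(1)]], simp)
  obtain e J where e: "dZ \<alpha> \<le> e" "e \<le> 1/2" and J: "finite J"
    and eq: "(\<Sum>k\<in>K. \<bar>of_int k + \<alpha>\<bar> * exp (-pi*c*(of_int k + \<alpha>)^2))
           = (\<Sum>j\<in>J. \<bar>of_int j + e\<bar> * exp (-pi*c*(of_int j + e)^2))"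
    using lattice_sum_recenter[OF K, of "\<lambda>x. \<bar>x\<bar> * exp (-pi*c*x^2)"] by auto
  have e0: "e \<ge> 0" using e(1) dZ_nonneg[of \<alpha>] by linarith
  show "(\<Sum>k\<in>K. \<bar>of_int k + \<alpha>\<bar> * exp (-pi*c*(of_int k + \<alpha>)^2))
           \<le> exp (-pi*c*(dZ \<alpha>)^2) * (30/49 + 5/7 + 10000/8281)"
    unfolding eq by (rule order_trans[OF centered_gauss_weighted_sum[OF q e0 e(2) J]])
      (rule mult_right_mono[OF central[OF e(1)]], simp)
qed

definition gauss2 :: "real \<Rightarrow> real \<Rightarrow> real \<Rightarrow> real \<Rightarrow> int^2 \<Rightarrow> real" where
  "gauss2 c1 c2 \<alpha>1 \<alpha>2 n =
     exp (-pi*c1*(of_int (n$1) + \<alpha>1)^2) * exp (-pi*c2*(of_int (n$2) + \<alpha>2)^2)"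

text \<open>The constant in the bound for \<open>\<Sum> (A + |n\<^sub>1+\<alpha>\<^sub>1| + |n\<^sub>2+\<alpha>\<^sub>2|) gauss2\<close>.\<close>

definition gauss2_const :: "real \<Rightarrow> real" where
  "gauss2_const A = A * (230/91)^2 + 2 * (230/91) * (30/49 + 5/7 + 10000/8281)"

lemma sum_coordinate_product_le:
  fixes F :: "(int^2) set" and f g :: "int \<Rightarrow> real"
  assumes F: "finite F" and f: "\<And>k. f k \<ge> 0" and g: "\<And>k. g k \<ge> 0"
  shows "(\<Sum>n\<in>F. f (n$1) * g (n$2)) \<le> (\<Sum>k\<in>(\<lambda>n. n$1) ` F. f k) * (\<Sum>l\<in>(\<lambda>n. n$2) ` F. g l)"
proof -
  let ?p = "\<lambda>n::int^2. (n$1, n$2)"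
  have inj: "inj_on ?p F" by (rule inj_onI) (simp add: vec_eq_iff forall_2)
  have "(\<Sum>n\<in>F. f (n$1) * g (n$2)) = (\<Sum>p\<in>?p ` F. f (fst p) * g (snd p))"
    by (simp add: sum.reindex[OF inj])
  also have "\<dots> \<le> (\<Sum>p\<in>((\<lambda>n. n$1) ` F) \<times> ((\<lambda>n. n$2) ` F). f (fst p) * g (snd p))"
    by (rule sum_mono2) (use F f g in auto)
  also have "\<dots> = (\<Sum>k\<in>(\<lambda>n. n$1) ` F. f k) * (\<Sum>l\<in>(\<lambda>n. n$2) ` F. g l)"
    by (simp add: sum_product sum.cartesian_product case_prod_beta)
  finally show ?thesis .
qed

lemma gauss2_weighted_finite_sum:
  fixes F :: "(int^2) set" and c1 c2 \<alpha>1 \<alpha>2 A :: real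
  assumes F: "finite F" and q1: "exp (-pi*c1) \<le> 3/10" and q2: "exp (-pi*c2) \<le> 3/10"
    and A: "A \<ge> 0"
  shows "(\<Sum>n\<in>F. (A + \<bar>of_int (n$1) + \<alpha>1\<bar> + \<bar>of_int (n$2) + \<alpha>2\<bar>) * gauss2 c1 c2 \<alpha>1 \<alpha>2 n)
     \<le> gauss2_const A * (exp (-pi*c1*(dZ \<alpha>1)^2) * exp (-pi*c2*(dZ \<alpha>2)^2))"
proof -
  define B0 :: real where "B0 = 230/91"
  define B1 :: real where "B1 = 30/49 + 5/7 + 10000/8281"
  define E1 where "E1 = exp (-pi*c1*(dZ \<alpha>1)^2)"
  define E2 where "E2 = exp (-pi*c2*(dZ \<alpha>2)^2)"
  define f0 where "f0 = (\<lambda>k::int. exp (-pi*c1*(of_int k + \<alpha>1)^2))"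
  define f1 where "f1 = (\<lambda>k::int. \<bar>of_int k + \<alpha>1\<bar> * f0 k)"
  define g0 where "g0 = (\<lambda>k::int. exp (-pi*c2*(of_int k + \<alpha>2)^2))"
  define g1 where "g1 = (\<lambda>k::int. \<bar>of_int k + \<alpha>2\<bar> * g0 k)"
  let ?P1 = "(\<lambda>n::int^2. n$1) ` F" and ?P2 = "(\<lambda>n::int^2. n$2) ` F"
  have nonneg: "f0 k \<ge> 0" "f1 k \<ge> 0" "g0 k \<ge> 0" "g1 k \<ge> 0" for k
    by (auto simp: f0_def f1_def g0_def g1_def)
  have "finite ?P1" "finite ?P2" using F by auto
  then have one_dim: "sum f0 ?P1 \<le> E1 * B0" "sum f1 ?P1 \<le> E1 * B1"
      "sum g0 ?P2 \<le> E2 * B0" "sum g1 ?P2 \<le> E2 * B1"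
    unfolding f0_def f1_def g0_def g1_def E1_def E2_def B0_def B1_def
    using gauss_sums_bound[OF q1] gauss_sums_bound[OF q2] by auto
  have prod: "(\<Sum>n\<in>F. f (n$1) * g (n$2)) \<le> (E1 * Bf) * (E2 * Bg)"
    if "\<And>k. f k \<ge> 0" "\<And>k. g k \<ge> 0" "sum f ?P1 \<le> E1 * Bf" "sum g ?P2 \<le> E2 * Bg" for f g Bf Bg
    using sum_coordinate_product_le[OF F that(1,2)] mult_mono[OF that(3,4)] that
    by (meson order_trans sum_nonneg)
  have "(\<Sum>n\<in>F. (A + \<bar>of_int (n$1) + \<alpha>1\<bar> + \<bar>of_int (n$2) + \<alpha>2\<bar>) * gauss2 c1 c2 \<alpha>1 \<alpha>2 n)
     = A * (\<Sum>n\<in>F. f0 (n$1) * g0 (n$2)) + (\<Sum>n\<in>F. f1 (n$1) * g0 (n$2)) + (\<Sum>n\<in>F. f0 (n$1) * g1 (n$2))"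
    by (simp add: gauss2_def f0_def f1_def g0_def g1_def sum_distrib_left
        sum.distrib[symmetric] algebra_simps)
  also have "\<dots> \<le> A * ((E1 * B0) * (E2 * B0)) + (E1 * B1) * (E2 * B0) + (E1 * B0) * (E2 * B1)"
    using A nonneg one_dim by (intro add_mono mult_left_mono prod) auto
  also have "\<dots> = gauss2_const A * (E1 * E2)"
    by (simp add: gauss2_const_def B0_def B1_def algebra_simps power2_eq_square)
  finally show ?thesis by (simp add: E1_def E2_def)
qed

lemma gauss2_weighted_summable:
  fixes c1 c2 \<alpha>1 \<alpha>2 A :: real
  assumes q1: "exp (-pi*c1) \<le> 3/10" and q2: "exp (-pi*c2) \<le> 3/10" and A: "A \<ge> 0"
  defines "w \<equiv> \<lambda>n. (A + \<bar>of_int (n$1) + \<alpha>1\<bar> + \<bar>of_int (n$2) + \<alpha>2\<bar>) * gauss2 c1 c2 \<alpha>1 \<alpha>2 n"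
  shows "w summable_on UNIV"
    and "infsum w UNIV \<le> gauss2_const A * (exp (-pi*c1*(dZ \<alpha>1)^2) * exp (-pi*c2*(dZ \<alpha>2)^2))"
proof -
  have "w n \<ge> 0" for n using A by (simp add: w_def gauss2_def)
  moreover have "sum w F \<le> gauss2_const A * (exp (-pi*c1*(dZ \<alpha>1)^2) * exp (-pi*c2*(dZ \<alpha>2)^2))"
    if "finite F" for F
    unfolding w_def by (rule gauss2_weighted_finite_sum[OF that q1 q2 A])
  ultimately show "w summable_on UNIV"
    and "infsum w UNIV \<le> gauss2_const A * (exp (-pi*c1*(dZ \<alpha>1)^2) * exp (-pi*c2*(dZ \<alpha>2)^2))"
    by (rule nonneg_summable_bounded, blast)+
qed

lemma exp_diff_bound:
  fixes a b :: complex
  shows "cmod (exp a - exp b) \<le> cmod (a - b) * (exp (Re a) + exp (Re b))"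
proof -
  let ?B = "max (exp (Re a)) (exp (Re b))"
  have "cmod (exp a - exp b) \<le> ?B * cmod (a - b)"
  proof (rule field_differentiable_bound[of "closed_segment b a"])
    show "\<And>z. z \<in> closed_segment b a \<Longrightarrow> (exp has_field_derivative exp z) (at z within closed_segment b a)"
      by (auto intro: has_field_derivative_at_within DERIV_exp)
    fix z assume "z \<in> closed_segment b a"
    then obtain u :: real where u: "0 \<le> u" "u \<le> 1" "z = (1 - u) *\<^sub>R b + u *\<^sub>R a"
      by (auto simp: in_segment)
    have "Re z = (1-u) * Re b + u * Re a" using u by simp
    also have "\<dots> \<le> (1-u) * max (Re a) (Re b) + u * max (Re a) (Re b)"
      using u by (intro add_mono mult_left_mono) auto
    finally have "Re z \<le> max (Re a) (Re b)" by (simp add: algebra_simps)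
    then show "cmod (exp z) \<le> ?B" by (auto simp: norm_exp_eq_Re max_def)
  qed auto
  also have "\<dots> \<le> (exp (Re a) + exp (Re b)) * cmod (a - b)"
    by (intro mult_right_mono) auto
  finally show ?thesis by (simp add: mult.commute)
qed

text \<open>Testing condition (i) of the fundamental
  domain on the symplectic matrix with \<open>C = diag(1,0)\<close>, \<open>D = diag(0,1)\<close> gives
  \<open>|\<tau>\<^sub>1\<^sub>1| \<ge> 1\<close>, hence \<open>Im \<tau>\<^sub>1\<^sub>1 \<ge> \<surd>3/2 > 43/50\<close>.\<close>

lemma F2_norm_tau11:
  assumes "\<tau> \<in> F2" shows "cmod (\<tau>$1$1) \<ge> 1"
proof -
  define A :: "int^2^2" where "A = (\<chi> i j. if i = j \<and> i = 2 then 1 else 0)"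
  define B :: "int^2^2" where "B = (\<chi> i j. if i = j \<and> i = 1 then -1 else 0)"
  define C :: "int^2^2" where "C = (\<chi> i j. if i = j \<and> i = 1 then 1 else 0)"
  have "Sp4Z_blocks A B C A"
    unfolding Sp4Z_blocks_def A_def B_def C_def
    by (simp add: vec_eq_iff forall_2 matrix_matrix_mult_def sum_2 transpose_def mat_def)
  then have "cmod (det (cmat C ** \<tau> + cmat A)) \<ge> 1" using assms by (auto simp: F2_def)
  moreover have "det (cmat C ** \<tau> + cmat A) = \<tau>$1$1"
    unfolding det_2 C_def A_def cmat_def by (simp add: matrix_matrix_mult_def sum_2)
  ultimately show ?thesis by simp
qed

lemma F2_Im_tau11:
  assumes "\<tau> \<in> F2" shows "Im (\<tau>$1$1) \<ge> 43/50"
proof -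
  have "\<bar>Re (\<tau>$1$1)\<bar> \<le> 1/2" and Im: "Im (\<tau>$1$1) \<ge> 0"
    using assms by (auto simp: F2_def)
  then have "\<bar>Re (\<tau>$1$1)\<bar>^2 \<le> (1/2)^2" by (intro power_mono) auto
  then have "(Re (\<tau>$1$1))^2 \<le> 1/4" by (simp add: power2_eq_square)
  moreover have "1 \<le> (cmod (\<tau>$1$1))^2" using F2_norm_tau11[OF assms] by (simp add: one_le_power)
  ultimately have "(43/50)^2 \<le> (Im (\<tau>$1$1))^2" by (simp add: cmod_power2 power_divide)
  then show ?thesis using Im by (rule power2_le_imp_le)
qed

lemma F2_symmetric:
  assumes "\<tau> \<in> F2" shows "\<tau>$2$1 = \<tau>$1$2"
proof -
  have "transpose \<tau> = \<tau>" using assms by (simp add: F2_def siegel_upper_def)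
  then have "(transpose \<tau>)$1$2 = \<tau>$1$2" by simp
  then show ?thesis by (simp add: transpose_def)
qed

text \<open>The Gaussian decay rates \<open>Im \<tau>\<^sub>i\<^sub>i - Im \<tau>\<^sub>1\<^sub>2\<close> are at least \<open>43/100\<close>,
  which makes \<open>e^{-\<pi> c} \<le> 3/10\<close>.\<close>

lemma F2_decay_rates:
  assumes F: "\<tau> \<in> F2"
  shows "exp (-pi * (Im (\<tau>$1$1) - Im (\<tau>$1$2))) \<le> 3/10"
    and "exp (-pi * (Im (\<tau>$2$2) - Im (\<tau>$1$2))) \<le> 3/10"
proof -
  have c1: "43/100 \<le> Im (\<tau>$1$1) - Im (\<tau>$1$2)" and c12: "Im (\<tau>$1$1) \<le> Im (\<tau>$2$2)"
    using F2_Im_tau11[OF F] F by (auto simp: F2_def)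
  have "(314/100) * (43/100) \<le> pi * (Im (\<tau>$1$1) - Im (\<tau>$1$2))"
    using pi_approx c1 by (intro mult_mono) auto
  then have "exp (27/20::real) \<le> exp (pi * (Im (\<tau>$1$1) - Im (\<tau>$1$2)))" by simp
  moreover have "(10/3::real) \<le> (1 + (27/20) / real 8)^8" by (simp add: power_divide)
  moreover have "(1 + (27/20) / real 8)^8 \<le> exp (27/20::real)"
    by (rule exp_ge_one_plus_x_over_n_power_n) auto
  ultimately have "10/3 \<le> exp (pi * (Im (\<tau>$1$1) - Im (\<tau>$1$2)))" by linarith
  then have "inverse (exp (pi * (Im (\<tau>$1$1) - Im (\<tau>$1$2)))) \<le> inverse (10/3)"
    by (intro le_imp_inverse_le) auto
  then show first: "exp (-pi * (Im (\<tau>$1$1) - Im (\<tau>$1$2))) \<le> 3/10"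
    by (simp add: exp_minus[symmetric])
  have "exp (-pi * (Im (\<tau>$2$2) - Im (\<tau>$1$2))) \<le> exp (-pi * (Im (\<tau>$1$1) - Im (\<tau>$1$2)))"
    using c12 by simp
  then show "exp (-pi * (Im (\<tau>$2$2) - Im (\<tau>$1$2))) \<le> 3/10" using first by linarith
qed

text \<open>Entries of \<open>\<tau> \<in> F_2\<close> have modulus at most \<open>1/2 + Im \<tau>\<^sub>i\<^sub>j\<close>; summed
  as they occur in \<open>\<tau> Y\<close> and in \<open>Y\<^sup>t \<tau> Y\<close> this gives bounds in terms of the trace.\<close>

lemma F2_entry_bounds:
  assumes F: "\<tau> \<in> F2"
  defines "Tr \<equiv> Im (\<tau>$1$1) + Im (\<tau>$2$2)"
  shows "cmod (\<tau>$1$1) + cmod (\<tau>$1$2) \<le> 1 + Tr"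
    and "cmod (\<tau>$1$2) + cmod (\<tau>$2$2) \<le> 1 + Tr"
    and "cmod (\<tau>$1$1) + 2 * cmod (\<tau>$1$2) + cmod (\<tau>$2$2) \<le> 2 + 2 * Tr"
proof -
  have entry: "cmod (\<tau>$i$j) \<le> 1/2 + Im (\<tau>$i$j)" if "Im (\<tau>$i$j) \<ge> 0" for i j
  proof -
    have "\<bar>Re (\<tau>$i$j)\<bar> \<le> 1/2" using F by (simp add: F2_def)
    then show ?thesis using cmod_le[of "\<tau>$i$j"] that by linarith
  qed
  have "0 \<le> Im (\<tau>$1$2)" "2 * Im (\<tau>$1$2) \<le> Im (\<tau>$1$1)" "Im (\<tau>$1$1) \<le> Im (\<tau>$2$2)"
    using F by (auto simp: F2_def)
  then show "cmod (\<tau>$1$1) + cmod (\<tau>$1$2) \<le> 1 + Tr"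
    and "cmod (\<tau>$1$2) + cmod (\<tau>$2$2) \<le> 1 + Tr"
    and "cmod (\<tau>$1$1) + 2 * cmod (\<tau>$1$2) + cmod (\<tau>$2$2) \<le> 2 + 2 * Tr"
    using entry[of 1 1] entry[of 1 2] entry[of 2 2] unfolding Tr_def by auto
qed

definition quad_form :: "complex^2^2 \<Rightarrow> complex \<Rightarrow> complex \<Rightarrow> complex" where
  "quad_form \<tau> p q = p * \<tau>$1$1 * p + p * \<tau>$1$2 * q + q * \<tau>$1$2 * p + q * \<tau>$2$2 * q"

text \<open>Writing \<open>Z = X + \<tau> Y\<close> and \<open>u = n + a + Y\<close>, the \<open>n\<close>-th term of
  \<open>\<theta>\<^sub>a\<^sub>,\<^sub>b(Z, \<tau>)\<close> is \<open>exp(theta_prefactor) \<cdot> exp(theta_phase n)\<close>, with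
  \<open>theta_phase n = 2\<pi>i (u\<^sup>t\<tau>u/2 + u\<^sup>t(X + b))\<close>.  For \<open>X = Y = 0\<close> these are
  the terms of \<open>\<theta>\<^sub>a\<^sub>,\<^sub>b(0, \<tau>)\<close>.\<close>

definition theta_phase :: "complex^2^2 \<Rightarrow> real^2 \<Rightarrow> real^2 \<Rightarrow> int^2 \<Rightarrow> complex" where
  "theta_phase \<tau> X Y n = 2 * pi * \<i> *
     (1/2 * quad_form \<tau> (of_real (of_int (n$1) + 1/2 + Y$1)) (of_real (of_int (n$2) + 1/2 + Y$2))
      + of_real ((of_int (n$1) + 1/2 + Y$1) * X$1 + (of_int (n$2) + 1/2 + Y$2) * (X$2 + 1/2)))"

definition theta_prefactor :: "complex^2^2 \<Rightarrow> real^2 \<Rightarrow> real^2 \<Rightarrow> complex" where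
  "theta_prefactor \<tau> X Y = 2 * pi * \<i> *
     (-(1/2) * quad_form \<tau> (of_real (Y$1)) (of_real (Y$2)) - of_real (Y$1 * X$1 + Y$2 * (X$2 + 1/2)))"

text \<open>Completing the square in the \<open>n\<close>-th term of the defining series.\<close>

lemma theta_summand_split:
  fixes \<tau> :: "complex^2^2" and X Y :: "real^2" and n :: "int^2"
  assumes sym: "\<tau>$2$1 = \<tau>$1$2"
  shows "(let w = (\<lambda>i. of_int (n $ i) + complex_of_real ((vector [1/2, 1/2] :: real^2) $ i)) in
      exp (2 * pi * \<i> * ((1/2) * (\<Sum>i\<in>UNIV. \<Sum>j\<in>UNIV. w i * \<tau> $ i $ j * w j)
         + (\<Sum>i\<in>UNIV. w i * ((\<chi> i. complex_of_real (X $ i) + (\<Sum>j\<in>UNIV. \<tau> $ i $ j * complex_of_real (Y $ j))) $ i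
             + complex_of_real ((vector [0, 1/2] :: real^2) $ i))))))
    = exp (theta_prefactor \<tau> X Y) * exp (theta_phase \<tau> X Y n)"
proof -
  have "(let w = (\<lambda>i. of_int (n $ i) + complex_of_real ((vector [1/2, 1/2] :: real^2) $ i)) in
      exp (2 * pi * \<i> * ((1/2) * (\<Sum>i\<in>UNIV. \<Sum>j\<in>UNIV. w i * \<tau> $ i $ j * w j)
         + (\<Sum>i\<in>UNIV. w i * ((\<chi> i. complex_of_real (X $ i) + (\<Sum>j\<in>UNIV. \<tau> $ i $ j * complex_of_real (Y $ j))) $ i
             + complex_of_real ((vector [0, 1/2] :: real^2) $ i))))))
    = exp (2 * pi * \<i> * ((1/2) * ((of_int (n$1) + 1/2) * \<tau>$1$1 * (of_int (n$1) + 1/2)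
          + (of_int (n$1) + 1/2) * \<tau>$1$2 * (of_int (n$2) + 1/2)
          + ((of_int (n$2) + 1/2) * \<tau>$1$2 * (of_int (n$1) + 1/2)
          + (of_int (n$2) + 1/2) * \<tau>$2$2 * (of_int (n$2) + 1/2)))
        + ((of_int (n$1) + 1/2) * (of_real (X$1) + (\<tau>$1$1 * of_real (Y$1) + \<tau>$1$2 * of_real (Y$2)) + 0)
          + (of_int (n$2) + 1/2) * (of_real (X$2) + (\<tau>$1$2 * of_real (Y$1) + \<tau>$2$2 * of_real (Y$2)) + 1/2))))"
    unfolding Let_def
    by (simp only: sum_2 vector_2 vec_lambda_beta sym of_real_divide of_real_1 of_real_numeral of_real_0)
  also have "\<dots> = exp (theta_prefactor \<tau> X Y + theta_phase \<tau> X Y n)"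
    unfolding theta_prefactor_def theta_phase_def quad_form_def
    by (rule arg_cong[where f=exp]) (simp, algebra)
  finally show ?thesis by (simp add: exp_add)
qed

lemma theta_factorization:
  fixes \<tau> :: "complex^2^2" and X Y :: "real^2"
  assumes sym: "\<tau>$2$1 = \<tau>$1$2"
  defines "Z \<equiv> (\<chi> i. complex_of_real (X $ i) + (\<Sum>j\<in>UNIV. \<tau> $ i $ j * complex_of_real (Y $ j)))"
  shows "theta (vector [1/2, 1/2]) (vector [0, 1/2]) Z \<tau>
       = exp (theta_prefactor \<tau> X Y) * infsum (\<lambda>n. exp (theta_phase \<tau> X Y n)) UNIV"
proof -
  have "theta (vector [1/2, 1/2]) (vector [0, 1/2]) Z \<tau>
      = infsum (\<lambda>n. exp (theta_prefactor \<tau> X Y) * exp (theta_phase \<tau> X Y n)) UNIV"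
    unfolding theta_def Z_def by (rule infsum_cong) (rule theta_summand_split[OF sym])
  then show ?thesis by (simp add: infsum_cmult_right')
qed

lemma Im_quad_form_real:
  "Im (quad_form \<tau> (of_real p) (of_real q))
     = p * p * Im (\<tau>$1$1) + 2 * p * q * Im (\<tau>$1$2) + q * q * Im (\<tau>$2$2)"
  by (simp add: quad_form_def algebra_simps)

lemma Re_theta_phase:
  "Re (theta_phase \<tau> X Y n) = - pi * Im (quad_form \<tau> (of_real (of_int (n$1) + 1/2 + Y$1))
                                                   (of_real (of_int (n$2) + 1/2 + Y$2)))"
  by (simp add: theta_phase_def)

lemma Re_theta_prefactor:
  "Re (theta_prefactor \<tau> X Y) = pi * Im (quad_form \<tau> (of_real (Y$1)) (of_real (Y$2)))"
  by (simp add: theta_prefactor_def)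

text \<open>With \<open>Im \<tau>\<^sub>1\<^sub>2 \<ge> 0\<close> the quadratic form of \<open>Im \<tau>\<close> dominates the diagonal
  form with entries \<open>Im \<tau>\<^sub>i\<^sub>i - Im \<tau>\<^sub>1\<^sub>2\<close>; hence each theta term is bounded by a
  product Gaussian.\<close>

lemma theta_phase_gauss_bound:
  assumes t12: "Im (\<tau>$1$2) \<ge> 0"
  shows "exp (Re (theta_phase \<tau> X Y n))
     \<le> gauss2 (Im (\<tau>$1$1) - Im (\<tau>$1$2)) (Im (\<tau>$2$2) - Im (\<tau>$1$2)) (1/2 + Y$1) (1/2 + Y$2) n"
proof -
  define p where "p = of_int (n$1) + 1/2 + Y$1"
  define q where "q = of_int (n$2) + 1/2 + Y$2"
  have "(Im (\<tau>$1$1) - Im (\<tau>$1$2)) * p^2 + (Im (\<tau>$2$2) - Im (\<tau>$1$2)) * q^2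
      \<le> p * p * Im (\<tau>$1$1) + 2 * p * q * Im (\<tau>$1$2) + q * q * Im (\<tau>$2$2)"
    using mult_nonneg_nonneg[OF t12 zero_le_power2[of "p + q"]]
    by (simp add: power2_eq_square algebra_simps)
  then have "pi * ((Im (\<tau>$1$1) - Im (\<tau>$1$2)) * p^2 + (Im (\<tau>$2$2) - Im (\<tau>$1$2)) * q^2)
      \<le> pi * (p * p * Im (\<tau>$1$1) + 2 * p * q * Im (\<tau>$1$2) + q * q * Im (\<tau>$2$2))"
    by (intro mult_left_mono) auto
  then have "Re (theta_phase \<tau> X Y n)
      \<le> -pi*(Im (\<tau>$1$1) - Im (\<tau>$1$2))*p^2 + -pi*(Im (\<tau>$2$2) - Im (\<tau>$1$2))*q^2"
    unfolding Re_theta_phase Im_quad_form_real p_def q_def by (simp add: algebra_simps)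
  then show ?thesis
    unfolding gauss2_def p_def q_def by (simp add: exp_add[symmetric] add.assoc)
qed

text \<open>\<open>Im \<tau>\<close> is invertible on \<open>F_2\<close> (its determinant is at least
  \<open>Im \<tau>\<^sub>1\<^sub>1 Im \<tau>\<^sub>2\<^sub>2 / 2 > 0\<close>), so \<open>matrix_inv\<close> really inverts it.\<close>

lemma matrix_inv_cancel:
  fixes A :: "'a::field^'n^'n"
  assumes "invertible A"
  shows "matrix_inv A *v (A *v y) = y"
proof -
  have "\<exists>A'. A ** A' = mat 1 \<and> A' ** A = mat 1" using assms by (simp add: invertible_def)
  then have "A ** matrix_inv A = mat 1 \<and> matrix_inv A ** A = mat 1"
    unfolding matrix_inv_def by (rule someI_ex)
  then show ?thesis by (simp add: matrix_vector_mul_assoc)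
qed

lemma F2_Im_invertible:
  assumes F: "\<tau> \<in> F2" shows "invertible (ImM \<tau>)"
proof -
  have t: "0 \<le> Im (\<tau>$1$2)" "2 * Im (\<tau>$1$2) \<le> Im (\<tau>$1$1)" "Im (\<tau>$1$1) \<le> Im (\<tau>$2$2)"
    using F by (auto simp: F2_def)
  have pos: "Im (\<tau>$1$1) > 0" using F2_Im_tau11[OF F] by linarith
  have "Im (\<tau>$1$2) * Im (\<tau>$1$2) \<le> (Im (\<tau>$1$1) / 2) * Im (\<tau>$2$2)"
    using t by (intro mult_mono) auto
  also have "\<dots> < Im (\<tau>$1$1) * Im (\<tau>$2$2)" using t pos by simp
  finally have "det (ImM \<tau>) \<noteq> 0"
    by (simp add: det_2 ImM_def F2_symmetric[OF F])
  then show ?thesis by (simp add: invertible_det_nz)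
qed

text \<open>The prefactor cancels the normalising exponential: since \<open>Im Z = Im \<tau> \<cdot> Y\<close>,
  the weighted modulus of \<open>\<theta>\<^sub>a\<^sub>,\<^sub>b(Z,\<tau>)\<close> is the modulus of the phase series.\<close>

lemma theta_weighted_norm:
  fixes \<tau> :: "complex^2^2" and X Y :: "real^2"
  assumes F: "\<tau> \<in> F2"
  defines "Z \<equiv> (\<chi> i. complex_of_real (X $ i) + (\<Sum>j\<in>UNIV. \<tau> $ i $ j * complex_of_real (Y $ j)))"
  shows "cmod (theta (vector [1/2, 1/2]) (vector [0, 1/2]) Z \<tau>)
           * exp (- pi * (ImV Z \<bullet> (matrix_inv (ImM \<tau>) *v ImV Z)))
       = cmod (infsum (\<lambda>n. exp (theta_phase \<tau> X Y n)) UNIV)"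
proof -
  have sym: "\<tau>$2$1 = \<tau>$1$2" by (rule F2_symmetric[OF F])
  have IZ: "ImV Z = ImM \<tau> *v Y"
    by (simp add: vec_eq_iff forall_2 ImV_def ImM_def Z_def matrix_vector_mult_def sum_2)
  have "ImV Z \<bullet> (matrix_inv (ImM \<tau>) *v ImV Z) = (ImM \<tau> *v Y) \<bullet> Y"
    unfolding IZ matrix_inv_cancel[OF F2_Im_invertible[OF F]] ..
  also have "\<dots> = Im (quad_form \<tau> (of_real (Y$1)) (of_real (Y$2)))"
    unfolding Im_quad_form_real
    by (simp add: inner_vec_def sum_2 matrix_vector_mult_def ImM_def sym algebra_simps)
  finally have "exp (- pi * (ImV Z \<bullet> (matrix_inv (ImM \<tau>) *v ImV Z)))
      = inverse (cmod (exp (theta_prefactor \<tau> X Y)))"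
    by (simp add: norm_exp_eq_Re Re_theta_prefactor exp_minus)
  then show ?thesis
    unfolding Z_def theta_factorization[OF sym] by (simp add: norm_mult)
qed

text \<open>The characteristic \<open>(a, b)\<close> is odd: the involution \<open>n \<mapsto> -n - 1\<close> of
  \<open>\<int>^2\<close> changes the sign of every term of \<open>\<theta>\<^sub>a\<^sub>,\<^sub>b(0, \<tau>)\<close>, so this value vanishes.\<close>

lemma theta_phase_origin_odd:
  "exp (theta_phase \<tau> 0 0 (\<chi> i. - n$i - 1)) = - exp (theta_phase \<tau> 0 0 n)"
proof -
  define A where "A = pi * \<i> * quad_form \<tau> (of_real (of_int (n$1) + 1/2)) (of_real (of_int (n$2) + 1/2))"
  define B where "B = pi * \<i> * of_real (of_int (n$2) + 1/2)"
  have flip: "of_int ((\<chi> i. - n$i - 1)$k) + 1/2 + (0::real^2)$k = - (of_int (n$k) + 1/2 + (0::real^2)$k)"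
    for k by simp
  have neg: "quad_form \<tau> (- p) (- q) = quad_form \<tau> p q" for p q by (simp add: quad_form_def)
  have "theta_phase \<tau> 0 0 (\<chi> i. - n$i - 1) = A - B"
    unfolding theta_phase_def flip of_real_minus neg by (simp add: A_def B_def algebra_simps)
  moreover have "theta_phase \<tau> 0 0 n = A + B"
    by (simp add: theta_phase_def A_def B_def algebra_simps)
  moreover have "exp (2 * B) = -1"
    using exp_integer_2pi_plus1[of "n$2"] by (simp add: B_def algebra_simps)
  moreover have "exp (A + B) = exp (A - B) * exp (2 * B)"
    by (simp add: exp_add[symmetric] add.commute)
  ultimately show ?thesis by simp
qed

lemma theta_series_at_origin:
  "infsum (\<lambda>n. exp (theta_phase \<tau> 0 0 n)) UNIV = 0"
proof -
  define \<sigma> :: "int^2 \<Rightarrow> int^2" where "\<sigma> = (\<lambda>n. \<chi> i. - n$i - 1)"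
  have "\<sigma> (\<sigma> n) = n" for n by (simp add: \<sigma>_def vec_eq_iff)
  then have bij: "bij_betw \<sigma> UNIV UNIV" by (metis bij_betw_def inj_def surj_def)
  have "infsum (\<lambda>n. exp (theta_phase \<tau> 0 0 n)) UNIV = infsum (\<lambda>n. exp (theta_phase \<tau> 0 0 (\<sigma> n))) UNIV"
    by (rule infsum_reindex_bij_betw[OF bij, symmetric])
  also have "\<dots> = - infsum (\<lambda>n. exp (theta_phase \<tau> 0 0 n)) UNIV"
    by (simp add: \<sigma>_def theta_phase_origin_odd infsum_uminus)
  finally show ?thesis by simp
qed

lemma theta_phase_diff:
  "theta_phase \<tau> X Y n - theta_phase \<tau> 0 0 n = 2 * pi * \<i> *
     (of_real (of_int (n$1) + 1/2) * (\<tau>$1$1 * of_real (Y$1) + \<tau>$1$2 * of_real (Y$2))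
      + of_real (of_int (n$2) + 1/2) * (\<tau>$1$2 * of_real (Y$1) + \<tau>$2$2 * of_real (Y$2))
      + 1/2 * quad_form \<tau> (of_real (Y$1)) (of_real (Y$2))
      + of_real ((of_int (n$1) + 1/2) * X$1 + (of_int (n$2) + 1/2) * X$2
                 + Y$1 * X$1 + Y$2 * X$2 + Y$2 / 2))"
  unfolding theta_phase_def quad_form_def by (simp add: field_simps)

lemma norm_linear_form_le:
  fixes a b :: complex
  assumes "\<bar>p\<bar> \<le> \<nu>" "\<bar>q\<bar> \<le> \<nu>"
  shows "cmod (a * of_real p + b * of_real q) \<le> \<nu> * (cmod a + cmod b)"
proof -
  have "cmod (a * of_real p + b * of_real q) \<le> cmod a * \<bar>p\<bar> + cmod b * \<bar>q\<bar>"
    by (metis norm_mult norm_of_real norm_triangle_ineq)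
  also have "\<dots> \<le> cmod a * \<nu> + cmod b * \<nu>"
    using assms by (intro add_mono mult_left_mono) auto
  finally show ?thesis by (simp add: algebra_simps)
qed

lemma norm_quad_form_le:
  assumes "\<bar>p\<bar> \<le> \<nu>" "\<bar>q\<bar> \<le> \<nu>"
  shows "cmod (quad_form \<tau> (of_real p) (of_real q))
    \<le> \<nu>^2 * (cmod (\<tau>$1$1) + 2 * cmod (\<tau>$1$2) + cmod (\<tau>$2$2))"
proof -
  have "\<bar>p\<bar> * \<bar>p\<bar> \<le> \<nu> * \<nu>" "\<bar>p\<bar> * \<bar>q\<bar> \<le> \<nu> * \<nu>" "\<bar>q\<bar> * \<bar>q\<bar> \<le> \<nu> * \<nu>"
    by (rule mult_mono; use assms in auto)+
  then have sq: "\<bar>p\<bar> * \<bar>p\<bar> \<le> \<nu>^2" "\<bar>p\<bar> * \<bar>q\<bar> \<le> \<nu>^2" "\<bar>q\<bar> * \<bar>q\<bar> \<le> \<nu>^2"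
    by (simp_all add: power2_eq_square)
  have "quad_form \<tau> (of_real p) (of_real q)
      = of_real (p * p) * \<tau>$1$1 + of_real (2 * p * q) * \<tau>$1$2 + of_real (q * q) * \<tau>$2$2"
    by (simp add: quad_form_def algebra_simps)
  also have "cmod \<dots> \<le> cmod (of_real (p * p) * \<tau>$1$1) + cmod (of_real (2 * p * q) * \<tau>$1$2)
                       + cmod (of_real (q * q) * \<tau>$2$2)"
    by (meson norm_triangle_ineq order_trans add_right_mono)
  also have "\<dots> = (\<bar>p\<bar> * \<bar>p\<bar>) * cmod (\<tau>$1$1) + 2 * ((\<bar>p\<bar> * \<bar>q\<bar>) * cmod (\<tau>$1$2))
                 + (\<bar>q\<bar> * \<bar>q\<bar>) * cmod (\<tau>$2$2)"
    by (simp add: norm_mult abs_mult)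
  also have "\<dots> \<le> \<nu>^2 * cmod (\<tau>$1$1) + 2 * (\<nu>^2 * cmod (\<tau>$1$2)) + \<nu>^2 * cmod (\<tau>$2$2)"
    using sq by (intro add_mono mult_right_mono mult_left_mono) auto
  finally show ?thesis by (simp add: algebra_simps)
qed

lemma theta_phase_diff_bound:
  fixes n :: "int^2"
  assumes F: "\<tau> \<in> F2"
    and X: "\<bar>X$1\<bar> \<le> \<nu>" "\<bar>X$2\<bar> \<le> \<nu>" and Y: "\<bar>Y$1\<bar> \<le> \<nu>" "\<bar>Y$2\<bar> \<le> \<nu>" and \<nu>: "\<nu> \<le> 1/2"
  defines "Tr \<equiv> Im (\<tau>$1$1) + Im (\<tau>$2$2)"
    and "w1 \<equiv> of_int (n$1) + 1/2" and "w2 \<equiv> of_int (n$2) + 1/2"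
  shows "cmod (theta_phase \<tau> X Y n - theta_phase \<tau> 0 0 n)
           \<le> 2 * pi * (\<nu> * (2 + Tr) * (1 + \<bar>w1\<bar> + \<bar>w2\<bar>))"
proof -
  have \<nu>0: "0 \<le> \<nu>" and Tr0: "0 \<le> Tr"
    using X F2_Im_tau11[OF F] F by (auto simp: Tr_def F2_def)
  let ?L1 = "\<tau>$1$1 * of_real (Y$1) + \<tau>$1$2 * of_real (Y$2)"
  let ?L2 = "\<tau>$1$2 * of_real (Y$1) + \<tau>$2$2 * of_real (Y$2)"
  let ?Q = "quad_form \<tau> (of_real (Y$1)) (of_real (Y$2))"
  let ?r = "w1 * X$1 + w2 * X$2 + Y$1 * X$1 + Y$2 * X$2 + Y$2 / 2"
  have L1: "cmod ?L1 \<le> \<nu> * (1 + Tr)" and L2: "cmod ?L2 \<le> \<nu> * (1 + Tr)"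
    using norm_linear_form_le[OF Y] F2_entry_bounds(1,2)[OF F] \<nu>0
    unfolding Tr_def by (meson mult_left_mono order_trans)+
  have "cmod ?Q \<le> \<nu>^2 * (2 + 2 * Tr)"
    using norm_quad_form_le[OF Y] F2_entry_bounds(3)[OF F] \<nu>0
    unfolding Tr_def by (meson mult_left_mono order_trans zero_le_power2)
  also have "\<dots> \<le> (\<nu> * (1/2)) * (2 + 2 * Tr)"
    using mult_left_mono[OF \<nu> \<nu>0] Tr0 by (intro mult_right_mono) (auto simp: power2_eq_square)
  finally have Q: "cmod (1/2 * ?Q) \<le> 1/2 * (\<nu> * (1 + Tr))" by (simp add: norm_mult algebra_simps)
  have "\<bar>?r\<bar> \<le> \<bar>w1\<bar> * \<bar>X$1\<bar> + \<bar>w2\<bar> * \<bar>X$2\<bar> + \<bar>Y$1\<bar> * \<bar>X$1\<bar> + \<bar>Y$2\<bar> * \<bar>X$2\<bar> + \<bar>Y$2\<bar> / 2"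
    by (simp add: abs_mult[symmetric])
  also have "\<dots> \<le> \<bar>w1\<bar> * \<nu> + \<bar>w2\<bar> * \<nu> + \<nu> * (1/2) + \<nu> * (1/2) + \<nu> / 2"
    using X Y \<nu> \<nu>0 by (intro add_mono mult_mono) auto
  finally have r: "\<bar>?r\<bar> \<le> \<nu> * (\<bar>w1\<bar> + \<bar>w2\<bar>) + 3/2 * \<nu>" by (simp add: algebra_simps)
  have "cmod (of_real w1 * ?L1 + of_real w2 * ?L2 + 1/2 * ?Q + of_real ?r)
      \<le> cmod (of_real w1 * ?L1) + cmod (of_real w2 * ?L2) + cmod (1/2 * ?Q) + cmod (of_real ?r :: complex)"
    by (meson norm_triangle_ineq order_trans add_right_mono)
  also have "\<dots> = \<bar>w1\<bar> * cmod ?L1 + \<bar>w2\<bar> * cmod ?L2 + cmod (1/2 * ?Q) + \<bar>?r\<bar>"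
    by (simp only: norm_mult norm_of_real)
  also have "\<dots> \<le> \<bar>w1\<bar> * (\<nu> * (1 + Tr)) + \<bar>w2\<bar> * (\<nu> * (1 + Tr)) + 1/2 * (\<nu> * (1 + Tr))
                 + (\<nu> * (\<bar>w1\<bar> + \<bar>w2\<bar>) + 3/2 * \<nu>)"
    using L1 L2 Q r by (intro add_mono mult_left_mono) auto
  also have "\<dots> = \<nu> * (2 + Tr) * (1 + \<bar>w1\<bar> + \<bar>w2\<bar>) - 1/2 * (\<nu> * Tr)"
    by (simp add: field_simps)
  also have "\<dots> \<le> \<nu> * (2 + Tr) * (1 + \<bar>w1\<bar> + \<bar>w2\<bar>)"
    using \<nu>0 Tr0 by simp
  finally show ?thesis
    unfolding theta_phase_diff w1_def w2_def by (simp add: norm_mult)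
qed

lemma theta_term_diff_bound:
  fixes n :: "int^2"
  assumes F: "\<tau> \<in> F2"
    and X: "\<bar>X$1\<bar> \<le> \<nu>" "\<bar>X$2\<bar> \<le> \<nu>" and Y: "\<bar>Y$1\<bar> \<le> \<nu>" "\<bar>Y$2\<bar> \<le> \<nu>" and \<nu>: "\<nu> \<le> 1/2"
  defines "Tr \<equiv> Im (\<tau>$1$1) + Im (\<tau>$2$2)"
    and "c1 \<equiv> Im (\<tau>$1$1) - Im (\<tau>$1$2)" and "c2 \<equiv> Im (\<tau>$2$2) - Im (\<tau>$1$2)"
  shows "cmod (exp (theta_phase \<tau> X Y n) - exp (theta_phase \<tau> 0 0 n))
     \<le> 2 * pi * \<nu> * (2 + Tr) *
        ((2 + \<bar>of_int (n$1) + (1/2 + Y$1)\<bar> + \<bar>of_int (n$2) + (1/2 + Y$2)\<bar>)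
           * gauss2 c1 c2 (1/2 + Y$1) (1/2 + Y$2) n
         + (1 + \<bar>of_int (n$1) + 1/2\<bar> + \<bar>of_int (n$2) + 1/2\<bar>) * gauss2 c1 c2 (1/2) (1/2) n)"
proof -
  let ?K = "2 * pi * \<nu> * (2 + Tr)"
  let ?W = "1 + \<bar>of_int (n$1) + 1/2\<bar> + \<bar>of_int (n$2) + 1/2 :: real\<bar>"
  let ?gY = "gauss2 c1 c2 (1/2 + Y$1) (1/2 + Y$2) n" and ?g0 = "gauss2 c1 c2 (1/2) (1/2) n"
  have t12: "Im (\<tau>$1$2) \<ge> 0" using F by (simp add: F2_def)
  have gY: "exp (Re (theta_phase \<tau> X Y n)) \<le> ?gY"
    unfolding c1_def c2_def by (rule theta_phase_gauss_bound[OF t12])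
  have g0: "exp (Re (theta_phase \<tau> 0 0 n)) \<le> ?g0"
    using theta_phase_gauss_bound[OF t12, of 0 0 n] by (simp add: c1_def c2_def)
  have K0: "0 \<le> ?K" and gY0: "0 \<le> ?gY"
    using X F2_Im_tau11[OF F] F by (auto simp: Tr_def F2_def gauss2_def)
  have d: "cmod (theta_phase \<tau> X Y n - theta_phase \<tau> 0 0 n) \<le> ?K * ?W"
    using theta_phase_diff_bound[OF F X Y \<nu>, of n] by (simp add: Tr_def mult.assoc)
  have "cmod (exp (theta_phase \<tau> X Y n) - exp (theta_phase \<tau> 0 0 n))
      \<le> cmod (theta_phase \<tau> X Y n - theta_phase \<tau> 0 0 n)
          * (exp (Re (theta_phase \<tau> X Y n)) + exp (Re (theta_phase \<tau> 0 0 n)))"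
    by (rule exp_diff_bound)
  also have "\<dots> \<le> (?K * ?W) * (?gY + ?g0)"
    using d gY g0 K0 by (intro mult_mono add_mono) auto
  also have "\<dots> \<le> ?K * ((2 + \<bar>of_int (n$1) + (1/2 + Y$1)\<bar> + \<bar>of_int (n$2) + (1/2 + Y$2)\<bar>) * ?gY
                     + ?W * ?g0)"
  proof -
    have "?W \<le> 2 + \<bar>of_int (n$1) + (1/2 + Y$1)\<bar> + \<bar>of_int (n$2) + (1/2 + Y$2)\<bar>"
      using Y \<nu> by linarith
    then have "?W * ?gY \<le> (2 + \<bar>of_int (n$1) + (1/2 + Y$1)\<bar> + \<bar>of_int (n$2) + (1/2 + Y$2)\<bar>) * ?gY"
      using gY0 by (rule mult_right_mono)
    then have "?K * (?W * ?gY + ?W * ?g0)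
        \<le> ?K * ((2 + \<bar>of_int (n$1) + (1/2 + Y$1)\<bar> + \<bar>of_int (n$2) + (1/2 + Y$2)\<bar>) * ?gY + ?W * ?g0)"
      using K0 by (intro mult_left_mono add_right_mono)
    then show ?thesis by (simp add: algebra_simps)
  qed
  finally show ?thesis .
qed

text \<open>Since the series vanishes at the origin, the phase series at \<open>(X, Y)\<close> is
  bounded by the sum of the term-wise differences, i.e.\ by weighted Gaussian
  sums centered at \<open>a + Y\<close> and at \<open>a\<close>.\<close>

lemma theta_series_bound:
  assumes F: "\<tau> \<in> F2"
    and X: "\<bar>X$1\<bar> \<le> \<nu>" "\<bar>X$2\<bar> \<le> \<nu>" and Y: "\<bar>Y$1\<bar> \<le> \<nu>" "\<bar>Y$2\<bar> \<le> \<nu>" and \<nu>: "\<nu> \<le> 1/2"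
  defines "Tr \<equiv> Im (\<tau>$1$1) + Im (\<tau>$2$2)"
    and "c1 \<equiv> Im (\<tau>$1$1) - Im (\<tau>$1$2)" and "c2 \<equiv> Im (\<tau>$2$2) - Im (\<tau>$1$2)"
  shows "cmod (infsum (\<lambda>n. exp (theta_phase \<tau> X Y n)) UNIV)
     \<le> 2 * pi * \<nu> * (2 + Tr) *
        (gauss2_const 2 * (exp (-pi*c1*(dZ (1/2 + Y$1))^2) * exp (-pi*c2*(dZ (1/2 + Y$2))^2))
         + gauss2_const 1 * (exp (-pi*c1*(dZ (1/2))^2) * exp (-pi*c2*(dZ (1/2))^2)))"
proof -
  define K where "K = 2 * pi * \<nu> * (2 + Tr)"
  define h where "h = (\<lambda>n. exp (theta_phase \<tau> X Y n))"
  define h0 where "h0 = (\<lambda>n. exp (theta_phase \<tau> 0 0 n))"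
  define WY where "WY = (\<lambda>n::int^2. (2 + \<bar>of_int (n$1) + (1/2 + Y$1)\<bar> + \<bar>of_int (n$2) + (1/2 + Y$2)\<bar>)
                            * gauss2 c1 c2 (1/2 + Y$1) (1/2 + Y$2) n)"
  define W0 where "W0 = (\<lambda>n::int^2. (1 + \<bar>of_int (n$1) + 1/2\<bar> + \<bar>of_int (n$2) + 1/2\<bar>)
                            * gauss2 c1 c2 (1/2) (1/2) n)"
  have q: "exp (-pi*c1) \<le> 3/10" "exp (-pi*c2) \<le> 3/10"
    unfolding c1_def c2_def by (rule F2_decay_rates[OF F])+
  note WY_sum = gauss2_weighted_summable[OF q, of 2 "1/2 + Y$1" "1/2 + Y$2", simplified, folded WY_def]
  note W0_sum = gauss2_weighted_summable[OF q, of 1 "1/2" "1/2", simplified, folded W0_def]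
  have K0: "0 \<le> K" using X F2_Im_tau11[OF F] F by (auto simp: K_def Tr_def F2_def)
  have diff: "norm (h n - h0 n) \<le> K * (WY n + W0 n)" for n
    using theta_term_diff_bound[OF F X Y \<nu>, of n]
    unfolding h_def h0_def K_def WY_def W0_def Tr_def c1_def c2_def .
  have dom_sum: "(\<lambda>n. K * (WY n + W0 n)) summable_on UNIV"
    by (intro summable_on_cmult_right summable_on_add WY_sum(1) W0_sum(1))
  have "norm (h0 n) \<le> W0 n" for n
  proof -
    have "norm (h0 n) \<le> gauss2 c1 c2 (1/2) (1/2) n"
      using theta_phase_gauss_bound[of \<tau> 0 0 n] F
      by (simp add: h0_def norm_exp_eq_Re c1_def c2_def F2_def)
    also have "\<dots> = 1 * gauss2 c1 c2 (1/2) (1/2) n" by simp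
    also have "\<dots> \<le> W0 n"
      unfolding W0_def by (intro mult_right_mono) (auto simp: gauss2_def)
    finally show ?thesis .
  qed
  then have h0_sum: "(\<lambda>n. norm (h0 n)) summable_on UNIV"
    by (rule Infinite_Sum.abs_summable_on_comparison_test'[OF W0_sum(1)])
  have "norm (infsum h UNIV) \<le> infsum (\<lambda>n. K * (WY n + W0 n)) UNIV"
    using theta_series_at_origin h0_sum dom_sum diff
    unfolding h0_def by (rule norm_infsum_le_by_vanishing_series)
  also have "\<dots> = K * (infsum WY UNIV + infsum W0 UNIV)"
    by (simp add: infsum_cmult_right' infsum_add WY_sum(1) W0_sum(1))
  also have "\<dots> \<le> K * (gauss2_const 2 * (exp (-pi*c1*(dZ (1/2 + Y$1))^2) * exp (-pi*c2*(dZ (1/2 + Y$2))^2))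
         + gauss2_const 1 * (exp (-pi*c1*(dZ (1/2))^2) * exp (-pi*c2*(dZ (1/2))^2)))"
    using K0 WY_sum(2) W0_sum(2) by (intro mult_left_mono add_mono) auto
  finally show ?thesis unfolding h_def K_def .
qed

text \<open>The point \<open>1/2\<close> is farthest from the integers, so
  \<open>d(1/2 + y, \<int>) \<le> d(1/2, \<int>)\<close> for \<open>|y| \<le> 1/2\<close>.\<close>

lemma dZ_half: "dZ (1/2) \<ge> 1/2"
proof -
  have ne: "(\<int>::real set) \<noteq> {}" using Ints_0 by blast
  have "1/2 \<le> dist (1/2::real) x" if "x \<in> \<int>" for x
  proof -
    from that obtain m where m: "x = of_int m" by (auto elim: Ints_cases)
    show ?thesis
    proof (cases "m \<le> 0")
      case True then have "real_of_int m \<le> 0" by simp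
      then show ?thesis by (simp add: m dist_real_def)
    next
      case False then have "real_of_int m \<ge> 1" by simp
      then show ?thesis by (simp add: m dist_real_def)
    qed
  qed
  then have "1/2 \<le> (INF x\<in>\<int>. dist (1/2::real) x)" by (intro cINF_greatest[OF ne])
  then show ?thesis by (simp add: dZ_def infdist_notempty[OF ne])
qed

lemma dZ_half_shift: assumes "\<bar>y\<bar> \<le> 1/2" shows "dZ (1/2 + y) \<le> 1/2"
proof (cases "y \<ge> 0")
  case True
  then show ?thesis using dZ_le[of "1/2 + y" 1] assms by simp
next
  case False
  then show ?thesis using dZ_le[of "1/2 + y" 0] assms by simp
qed

lemma gauss_centers_bound:
  fixes c1 c2 :: real and Y :: "real^2"
  assumes c: "0 \<le> c1" "0 \<le> c2" and Y: "\<bar>Y$1\<bar> \<le> 1/2" "\<bar>Y$2\<bar> \<le> 1/2"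
  defines "\<delta> \<equiv> min (dZ (1/2 + Y$1)) (dZ (1/2 + Y$2))"
  shows "gauss2_const 2 * (exp (-pi*c1*(dZ (1/2 + Y$1))^2) * exp (-pi*c2*(dZ (1/2 + Y$2))^2))
         + gauss2_const 1 * (exp (-pi*c1*(dZ (1/2))^2) * exp (-pi*c2*(dZ (1/2))^2))
       \<le> 45 * exp (- pi * (c1 + c2) * \<delta>^2)"
proof -
  have mono: "exp (-pi*c*d'^2) \<le> exp (-pi*c*\<delta>^2)" if "\<delta> \<le> d'" "0 \<le> c" for c d'
  proof -
    have "\<delta>^2 \<le> d'^2" using that dZ_nonneg by (intro power_mono) (auto simp: \<delta>_def)
    then show ?thesis using that by (simp add: mult_left_mono)
  qed
  have "\<delta> \<le> dZ (1/2)"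
    using dZ_half_shift[OF Y(1)] dZ_half by (simp add: \<delta>_def min_le_iff_disj)
  then have "exp (-pi*c1*(dZ (1/2 + Y$1))^2) * exp (-pi*c2*(dZ (1/2 + Y$2))^2)
        \<le> exp (-pi*c1*\<delta>^2) * exp (-pi*c2*\<delta>^2)"
    and "exp (-pi*c1*(dZ (1/2))^2) * exp (-pi*c2*(dZ (1/2))^2)
        \<le> exp (-pi*c1*\<delta>^2) * exp (-pi*c2*\<delta>^2)"
    using c by (intro mult_mono mono; simp add: \<delta>_def)+
  moreover have "gauss2_const 2 + gauss2_const 1 \<le> 45" "gauss2_const 1 \<ge> 0" "gauss2_const 2 \<ge> 0"
    by (simp_all add: gauss2_const_def power2_eq_square)
  ultimately have "gauss2_const 2 * (exp (-pi*c1*(dZ (1/2 + Y$1))^2) * exp (-pi*c2*(dZ (1/2 + Y$2))^2))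
         + gauss2_const 1 * (exp (-pi*c1*(dZ (1/2))^2) * exp (-pi*c2*(dZ (1/2))^2))
       \<le> (gauss2_const 2 + gauss2_const 1) * (exp (-pi*c1*\<delta>^2) * exp (-pi*c2*\<delta>^2))"
    by (simp add: distrib_right add_mono mult_left_mono)
  also have "\<dots> \<le> 45 * (exp (-pi*c1*\<delta>^2) * exp (-pi*c2*\<delta>^2))"
    using \<open>gauss2_const 2 + gauss2_const 1 \<le> 45\<close> by (intro mult_right_mono) auto
  also have "\<dots> = 45 * exp (- pi * (c1 + c2) * \<delta>^2)"
    by (simp add: exp_add[symmetric] algebra_simps)
  finally show ?thesis .
qed

text \<open>The constant \<open>C\<^sub>3(Y)\<close> of the statement: a lower bound used to absorb the
  constants of the series estimate, and the announced upper bound \<open>239.2\<close>.\<close>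

lemma C3_lower: "C3 Y \<ge> 32 + 53 * pi"
proof -
  have "9/4 \<le> 8 / pi" using pi_approx pi_gt_zero by (simp add: field_simps)
  then have "sqrt (9/4) \<le> sqrt ((Y$1)^2 + 8/pi)" by (intro real_sqrt_le_mono) (simp add: add_increasing)
  moreover have "sqrt (9/4::real) = 3/2" by (simp add: real_sqrt_divide)
  ultimately have "(7/2)^2 \<le> (sqrt ((Y$1)^2 + 8/pi) + 2)^2" by (intro power_mono) auto
  have "32 + 53 * pi = 8 * pi * (4 / pi + 0 + (1/2) * (7/2)^2 + 1/2)"
    using pi_gt_zero by (simp add: field_simps power2_eq_square)
  also have "\<dots> \<le> 8 * pi * (4 / pi + 2 * \<bar>Y $ 1\<bar> + (1/2) * (sqrt ((Y $ 1)^2 + 8 / pi) + 2)^2 + 1/2)"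
    using \<open>(7/2)^2 \<le> _\<close> by (intro mult_left_mono add_mono) auto
  also have "\<dots> \<le> C3 Y" unfolding C3_def by (rule Max_ge) auto
  finally show ?thesis .
qed

lemma C3_upper:
  assumes "\<bar>Y$1\<bar> \<le> 1/2" "\<bar>Y$2\<bar> \<le> 1/2"
  shows "C3 Y \<le> 239.2"
  unfolding C3_def
proof (rule Max.boundedI)
  fix v assume "v \<in> range (\<lambda>i. 8 * pi * (4 / pi + 2 * \<bar>Y $ i\<bar> + 1/2 * (sqrt ((Y $ i)^2 + 8 / pi) + 2)^2 + 1/2))"
  then obtain i where v: "v = 8 * pi * (4 / pi + 2 * \<bar>Y $ i\<bar> + 1/2 * (sqrt ((Y $ i)^2 + 8 / pi) + 2)^2 + 1/2)"
    by auto
  define y where "y = Y $ i"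
  define s where "s = sqrt (y^2 + 8/pi)"
  have y: "\<bar>y\<bar> \<le> 1/2" using assms exhaust_2[of i] by (auto simp: y_def)
  then have y2: "y^2 \<le> 1/4" using power_mono[of "\<bar>y\<bar>" "1/2" 2] by (simp add: power2_eq_square)
  have pi: "pi \<le> 3.1416" "0 < pi" using pi_approx by simp_all
  have ss: "s^2 = y^2 + 8/pi" unfolding s_def using pi by simp
  have "(pi * s)^2 = pi^2 * (y^2 + 8/pi)" by (simp add: power_mult_distrib ss)
  also have "\<dots> = pi^2 * y^2 + 8 * pi" using pi by (simp add: field_simps power2_eq_square)
  also have "\<dots> \<le> 3.1416^2 * (1/4) + 8 * 3.1416"
    using pi y2 by (intro add_mono mult_mono power_mono) auto
  also have "\<dots> \<le> 5.2536^2" by (simp add: power2_eq_square)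
  finally have ps: "pi * s \<le> 5.2536" by (rule power2_le_imp_le) simp
  have "v = 8 * pi * (4 / pi + 2 * \<bar>y\<bar> + 1/2 * (s + 2)^2 + 1/2)" by (simp add: v y_def s_def)
  also have "\<dots> = 32 + 16 * pi * \<bar>y\<bar> + 4 * pi * s^2 + 16 * (pi * s) + 20 * pi"
    using pi by (simp add: field_simps power2_eq_square)
  also have "\<dots> = 64 + 16 * pi * \<bar>y\<bar> + 4 * pi * y^2 + 16 * (pi * s) + 20 * pi"
    using pi by (simp add: ss field_simps)
  also have "\<dots> \<le> 64 + 16 * pi * (1/2) + 4 * pi * (1/4) + 16 * 5.2536 + 20 * pi"
    using y y2 ps pi by (intro add_mono mult_left_mono) auto
  also have "\<dots> \<le> 239.2" using pi by simp
  finally show "v \<le> 239.2" .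
qed auto

lemma C3_absorbs_constant:
  assumes "Tr \<ge> 0" shows "90 * pi * (2 + Tr) \<le> (4 + 3/2 * Tr) * C3 Y"
proof -
  have "pi \<le> 63/20" using pi_approx by simp
  then have "pi * Tr \<le> 63/20 * Tr" using assms by (rule mult_right_mono)
  then have "90 * pi * (2 + Tr) \<le> (4 + 3/2 * Tr) * (32 + 53 * pi)"
    using assms pi_gt3 by (simp add: algebra_simps)
  also have "\<dots> \<le> (4 + 3/2 * Tr) * C3 Y"
    using C3_lower assms by (intro mult_left_mono) auto
  finally show ?thesis .
qed

lemma theta_series_final_bound:
  assumes F: "\<tau> \<in> F2"
    and X: "\<bar>X$1\<bar> \<le> \<nu>" "\<bar>X$2\<bar> \<le> \<nu>" and Y: "\<bar>Y$1\<bar> \<le> \<nu>" "\<bar>Y$2\<bar> \<le> \<nu>" and \<nu>: "\<nu> \<le> 1/2"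
  defines "Tr \<equiv> Im (\<tau>$1$1) + Im (\<tau>$2$2)"
    and "\<delta> \<equiv> min (dZ (1/2 + Y$1)) (dZ (1/2 + Y$2))"
  shows "cmod (infsum (\<lambda>n. exp (theta_phase \<tau> X Y n)) UNIV)
     \<le> (4 + 3/2 * Tr) * \<nu> * C3 Y
         * exp (- pi * (Im (\<tau>$1$1) + Im (\<tau>$2$2) - 2 * Im (\<tau>$1$2)) * \<delta>^2)"
proof -
  let ?E = "exp (- pi * (Im (\<tau>$1$1) + Im (\<tau>$2$2) - 2 * Im (\<tau>$1$2)) * \<delta>^2)"
  have c: "0 \<le> Im (\<tau>$1$1) - Im (\<tau>$1$2)" "0 \<le> Im (\<tau>$2$2) - Im (\<tau>$1$2)"
    and \<nu>0: "0 \<le> \<nu>" and Tr0: "0 \<le> Tr"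
    using F X F2_Im_tau11[OF F] by (auto simp: F2_def Tr_def)
  have "cmod (infsum (\<lambda>n. exp (theta_phase \<tau> X Y n)) UNIV) \<le> 2 * pi * \<nu> * (2 + Tr) * (45 * ?E)"
    using theta_series_bound[OF F X Y \<nu>] gauss_centers_bound[OF c, of Y] Y \<nu> \<nu>0 Tr0
    unfolding Tr_def \<delta>_def
    by (smt (verit) mult_left_mono mult_nonneg_nonneg pi_gt_zero)
  also have "\<dots> = (90 * pi * (2 + Tr)) * (\<nu> * ?E)" by (simp add: algebra_simps)
  also have "\<dots> \<le> ((4 + 3/2 * Tr) * C3 Y) * (\<nu> * ?E)"
    using C3_absorbs_constant[OF Tr0] \<nu>0 by (intro mult_right_mono) auto
  finally show ?thesis by (simp add: algebra_simps)
qed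

lemma neg_ln_lower_bound:
  fixes s A \<nu> C E :: real
  assumes "0 < s" "s \<le> A * \<nu> * C * exp (- E)" "0 < A" "0 < \<nu>" "0 < C"
  shows "- ln s \<ge> E - ln A + ln (1 / \<nu>) - ln C"
proof -
  have "ln s \<le> ln (A * \<nu> * C * exp (- E))" using assms by simp
  also have "\<dots> = ln A + ln \<nu> + ln C - E" using assms by (simp add: ln_mult)
  finally show ?thesis using assms by (simp add: ln_div)
qed

theorem mainTheorem10:
  fixes \<tau> :: "complex^2^2" and X Y :: "real^2"
  defines "Z \<equiv> (\<chi> i. complex_of_real (X $ i) + (\<Sum>j\<in>UNIV. \<tau> $ i $ j * complex_of_real (Y $ j)))"
  defines "a \<equiv> (vector [1/2, 1/2] :: real^2)"
  defines "b \<equiv> (vector [0, 1/2] :: real^2)"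
  defines "nrm \<equiv> max (max \<bar>X $ 1\<bar> \<bar>X $ 2\<bar>) (max \<bar>Y $ 1\<bar> \<bar>Y $ 2\<bar>)"
  assumes "\<tau> \<in> F2"
    and "(X, Y) \<noteq> (0, 0)"
    and "nrm \<le> 1/2"
    and "theta a b Z \<tau> \<noteq> 0"
  shows "- ln (cmod (theta a b Z \<tau>) *
            exp (- pi * (ImV Z \<bullet> (matrix_inv (ImM \<tau>) *v ImV Z))))
         \<ge> pi * (Im (\<tau> $ 1 $ 1) + Im (\<tau> $ 2 $ 2) - 2 * Im (\<tau> $ 1 $ 2))
              * (min (dZ (1/2 + Y $ 1)) (dZ (1/2 + Y $ 2)))^2
           - ln (4 + 3/2 * (Im (\<tau> $ 1 $ 1) + Im (\<tau> $ 2 $ 2)))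
           + ln (1 / nrm) - ln (C3 Y)
       \<and> C3 Y \<le> 239.2"
proof -
  have F: "\<tau> \<in> F2" and nrm: "nrm \<le> 1/2" using assms by auto
  have bounds: "\<bar>X$1\<bar> \<le> nrm" "\<bar>X$2\<bar> \<le> nrm" "\<bar>Y$1\<bar> \<le> nrm" "\<bar>Y$2\<bar> \<le> nrm"
    by (simp_all add: nrm_def le_max_iff_disj)
  have "nrm \<noteq> 0"
  proof
    assume "nrm = 0"
    then have "X = 0" "Y = 0" using bounds by (simp_all add: vec_eq_iff forall_2)
    with \<open>(X, Y) \<noteq> (0, 0)\<close> show False by simp
  qed
  then have nrm_pos: "0 < nrm" using bounds by linarith
  define S where "S = cmod (infsum (\<lambda>n. exp (theta_phase \<tau> X Y n)) UNIV)"
  have weighted: "cmod (theta a b Z \<tau>) * exp (- pi * (ImV Z \<bullet> (matrix_inv (ImM \<tau>) *v ImV Z))) = S"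
    unfolding S_def a_def b_def Z_def by (rule theta_weighted_norm[OF F])
  have "0 < S"
    using \<open>theta a b Z \<tau> \<noteq> 0\<close> F unfolding S_def a_def b_def Z_def
    by (simp add: theta_factorization F2_symmetric)
  moreover have "S \<le> (4 + 3/2 * (Im (\<tau>$1$1) + Im (\<tau>$2$2))) * nrm * C3 Y
      * exp (- (pi * (Im (\<tau>$1$1) + Im (\<tau>$2$2) - 2 * Im (\<tau>$1$2))
                * (min (dZ (1/2 + Y$1)) (dZ (1/2 + Y$2)))^2))"
    unfolding S_def using theta_series_final_bound[OF F bounds nrm] by simp
  moreover have "Im (\<tau>$1$1) \<le> Im (\<tau>$2$2)" using F by (simp add: F2_def)
  then have "0 < 4 + 3/2 * (Im (\<tau>$1$1) + Im (\<tau>$2$2))"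
    using F2_Im_tau11[OF F] by (simp add: field_simps)
  moreover have "0 < C3 Y" using C3_lower[of Y] pi_gt_zero by linarith
  ultimately show ?thesis
    unfolding weighted using neg_ln_lower_bound nrm_pos C3_upper bounds nrm by auto
qed

end
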